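(* Let $(G,\prec)$ be a POP-graph and $e_1,e_2,e,e'\in E(G)$. (1) If $e_1\to e$, $e_2\to e$ and $e_1\prec e'\prec e_2$, then $e_1\not\to e'$ implies $e'\to e$. (2) If $e\to e_1$, $e\to e_2$ and $e_1\prec e'\prec e_2$, then $e'\not\to e_2$ implies $e\to e'$.
   Context: A progressive graph is a finite directed acyclic graph (parallel edges allowed) in which every source and every sink has degree one. For edges write $e\to e'$ if $e\neq e'$ and there is a directed path whose first edge is $e$ and last edge is $e'$. A planar order on $G$ is a linear order $\prec$ on $E(G)$ such that (P1) $e_1\to e_2$ implies $e_1\prec e_2$; (P2) if $e_1\prec e_2\prec e_3$ and $e_1\to e_3$ then $e_1\to e_2$ or $e_2\to e_3$. A POP-graph is a progressive graph with a planar order. *)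

theory Defs
  imports Main
begin

text \<open>A directed multigraph is given by a vertex set V, an edge set E and
  source/target maps src, tgt (parallel edges allowed).\<close>

definition is_path :: "'e set \<Rightarrow> ('e \<Rightarrow> 'v) \<Rightarrow> ('e \<Rightarrow> 'v) \<Rightarrow> 'e list \<Rightarrow> bool" where
  "is_path E src tgt p \<longleftrightarrow> p \<noteq> [] \<and> set p \<subseteq> E \<and>
     (\<forall>i. Suc i < length p \<longrightarrow> tgt (p ! i) = src (p ! Suc i))"

definition indeg :: "'e set \<Rightarrow> ('e \<Rightarrow> 'v) \<Rightarrow> 'v \<Rightarrow> nat" where
  "indeg E tgt v = card {e \<in> E. tgt e = v}"

definition outdeg :: "'e set \<Rightarrow> ('e \<Rightarrow> 'v) \<Rightarrow> 'v \<Rightarrow> nat" where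
  "outdeg E src v = card {e \<in> E. src e = v}"

definition progressive ::
  "'v set \<Rightarrow> 'e set \<Rightarrow> ('e \<Rightarrow> 'v) \<Rightarrow> ('e \<Rightarrow> 'v) \<Rightarrow> bool" where
  "progressive V E src tgt \<longleftrightarrow>
     finite V \<and> finite E \<and>
     (\<forall>e\<in>E. src e \<in> V \<and> tgt e \<in> V) \<and>
     \<comment> \<open>acyclic: no directed cycle\<close>
     (\<forall>p. is_path E src tgt p \<longrightarrow> tgt (last p) \<noteq> src (hd p)) \<and>
     \<comment> \<open>sources (in-degree 0) and sinks (out-degree 0) have degree one\<close>
     (\<forall>v\<in>V. indeg E tgt v = 0 \<longrightarrow> indeg E tgt v + outdeg E src v = 1) \<and>
     (\<forall>v\<in>V. outdeg E src v = 0 \<longrightarrow> indeg E tgt v + outdeg E src v = 1)"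

definition reaches :: "'e set \<Rightarrow> ('e \<Rightarrow> 'v) \<Rightarrow> ('e \<Rightarrow> 'v) \<Rightarrow> 'e \<Rightarrow> 'e \<Rightarrow> bool" where
  "reaches E src tgt e e' \<longleftrightarrow> e \<noteq> e' \<and>
     (\<exists>p. is_path E src tgt p \<and> hd p = e \<and> last p = e')"

text \<open>The linear order on E is given as a (reflexive) relation R with
  linear_order_on E R; its strict part is the order \<prec>.\<close>
definition prec :: "('e \<times> 'e) set \<Rightarrow> 'e \<Rightarrow> 'e \<Rightarrow> bool" where
  "prec R a b \<longleftrightarrow> (a, b) \<in> R \<and> a \<noteq> b"

definition planar_order ::
  "'e set \<Rightarrow> ('e \<Rightarrow> 'v) \<Rightarrow> ('e \<Rightarrow> 'v) \<Rightarrow> ('e \<times> 'e) set \<Rightarrow> bool" where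
  "planar_order E src tgt R \<longleftrightarrow>
     linear_order_on E R \<and>
     (\<forall>e1\<in>E. \<forall>e2\<in>E. reaches E src tgt e1 e2 \<longrightarrow> prec R e1 e2) \<and>
     (\<forall>e1\<in>E. \<forall>e2\<in>E. \<forall>e3\<in>E. prec R e1 e2 \<and> prec R e2 e3 \<and> reaches E src tgt e1 e3 \<longrightarrow>
        reaches E src tgt e1 e2 \<or> reaches E src tgt e2 e3)"

definition POP_graph ::
  "'v set \<Rightarrow> 'e set \<Rightarrow> ('e \<Rightarrow> 'v) \<Rightarrow> ('e \<Rightarrow> 'v) \<Rightarrow> ('e \<times> 'e) set \<Rightarrow> bool" where
  "POP_graph V E src tgt R \<longleftrightarrow> progressive V E src tgt \<and> planar_order E src tgt R"

end

theory Submission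
  imports Defs
begin

text \<open>Both parts follow from (P1), transitivity of \<prec> and one application of (P2):
  in (1), e1 \<prec> e' \<prec> e2 \<prec> e, so (P2) on the triple e1, e', e gives e1 \<rightarrow> e' or e' \<rightarrow> e;
  part (2) is the mirror image, with (P2) applied to e, e', e2.\<close>

lemma prec_trans:
  assumes "linear_order_on E R" "prec R a b" "prec R b c"
  shows "prec R a c"
proof -
  have "trans R" "antisym R"
    using assms(1) unfolding linear_order_on_def partial_order_on_def preorder_on_def by auto
  with assms(2,3) show ?thesis
    unfolding prec_def by (metis antisymD transD)
qed

lemma planar_order_reaches_prec:
  assumes "planar_order E src tgt R" "a \<in> E" "b \<in> E" "reaches E src tgt a b"
  shows "prec R a b"
  using assms unfolding planar_order_def by blast

lemma planar_order_reaches_split: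
  assumes "planar_order E src tgt R" "a \<in> E" "b \<in> E" "c \<in> E"
    and "prec R a b" "prec R b c" "reaches E src tgt a c"
  shows "reaches E src tgt a b \<or> reaches E src tgt b c"
  using assms unfolding planar_order_def by blast

lemma planar_order_linear:
  "planar_order E src tgt R \<Longrightarrow> linear_order_on E R"
  unfolding planar_order_def by blast

lemma planar_order_reaches_common_target:
  assumes planar: "planar_order E src tgt R"
    and "e1 \<in> E" "e2 \<in> E" "e \<in> E" "e' \<in> E"
    and "reaches E src tgt e1 e" "reaches E src tgt e2 e"
    and "prec R e1 e'" "prec R e' e2" "\<not> reaches E src tgt e1 e'"
  shows "reaches E src tgt e' e"
proof -
  have "prec R e' e"
    using prec_trans[OF planar_order_linear[OF planar] assms(9)]
      planar_order_reaches_prec[OF planar assms(3,4,7)] .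
  then show ?thesis
    using planar_order_reaches_split[OF planar assms(2,5,4,8) _ assms(6)] assms(10) by blast
qed

lemma planar_order_reaches_common_source:
  assumes planar: "planar_order E src tgt R"
    and "e1 \<in> E" "e2 \<in> E" "e \<in> E" "e' \<in> E"
    and "reaches E src tgt e e1" "reaches E src tgt e e2"
    and "prec R e1 e'" "prec R e' e2" "\<not> reaches E src tgt e' e2"
  shows "reaches E src tgt e e'"
proof -
  have "prec R e e'"
    using prec_trans[OF planar_order_linear[OF planar]
        planar_order_reaches_prec[OF planar assms(4,2,6)] assms(8)] .
  then show ?thesis
    using planar_order_reaches_split[OF planar assms(4,5,3) _ assms(9,7)] assms(10) by blast
qed

theorem lemma3p1:
  fixes V :: "'v set" and E :: "'e set" and src tgt :: "'e \<Rightarrow> 'v"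
    and R :: "('e \<times> 'e) set"
  assumes "POP_graph V E src tgt R"
    and "e1 \<in> E" "e2 \<in> E" "e \<in> E" "e' \<in> E"
  shows "(reaches E src tgt e1 e \<and> reaches E src tgt e2 e \<and> prec R e1 e' \<and> prec R e' e2
            \<longrightarrow> (\<not> reaches E src tgt e1 e' \<longrightarrow> reaches E src tgt e' e))
       \<and> (reaches E src tgt e e1 \<and> reaches E src tgt e e2 \<and> prec R e1 e' \<and> prec R e' e2
            \<longrightarrow> (\<not> reaches E src tgt e' e2 \<longrightarrow> reaches E src tgt e e'))"
proof -
  have planar: "planar_order E src tgt R"
    using assms(1) unfolding POP_graph_def by blast
  show ?thesis
    using planar_order_reaches_common_target[OF planar assms(2-5)]
      planar_order_reaches_common_source[OF planar assms(2-5)]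
    by meson
qed

end
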